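(* For fixed $\mu_L\in ID(\mathbb{R})$ the map $\Lambda_{\mu_L}:ID(\mathbb{R}^+)\to ID(\mathbb{R})$ is continuous, and for fixed $\mu_T\in ID(\mathbb{R}^+)$ the map $\Lambda_{\mu_T}:ID(\mathbb{R})\to ID(\mathbb{R})$ is continuous, where continuity is with respect to weak convergence of probability measures.
   Context: $ID(\mathbb{R})$: infinitely divisible laws on $\mathbb{R}$; $ID(\mathbb{R}^+)$: those supported on $[0,\infty)$. Let $\mu_L\in ID(\mathbb{R})$ have characteristic triplet $(\gamma,b,\nu)$ w.r.t. truncation $x\mathbf 1_{\{|x|\le1\}}$, and let $\mu_T\in ID(\mathbb{R}^+)$ have drift $\beta_0\ge0$ and Lévy measure $\rho$ on $(0,\infty)$. Write $\mu_L^s$ for the law with characteristic function $\hat\mu_L^{\,s}$. $\Lambda(\mu_L,\mu_T)$ is the infinitely divisible law with triplet $\bar b=b\beta_0$, $\bar\gamma=\gamma\beta_0+\int_0^\infty\int_{|x|\le1}x\,\mu_L^s(dx)\rho(ds)$, $\bar\nu(dx)=\beta_0\nu(dx)+\int_0^\infty\mu_L^s(dx)\rho(ds)$ on $\mathbb{R}\setminus\{0\}$; equivalently the law of $L_{T_1}$ for a Lévy process $L$ with $L_1\sim\mu_L$ and an independent subordinator $T$ with $T_1\sim\mu_T$. $\Lambda_{\mu_L}(\mu_T)=\Lambda_{\mu_T}(\mu_L)=\Lambda(\mu_L,\mu_T)$. *)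

theory Defs
  imports "HOL-Probability.Probability" "HOL-Probability.Convolution"
begin

fun conv_pow :: "real measure \<Rightarrow> nat \<Rightarrow> real measure" where
  "conv_pow N 0 = return borel 0"
| "conv_pow N (Suc n) = convolution N (conv_pow N n)"

definition infinitely_divisible :: "real measure \<Rightarrow> bool" where
  "infinitely_divisible M \<longleftrightarrow> real_distribution M \<and>
     (\<forall>n::nat. n \<ge> 1 \<longrightarrow> (\<exists>N. real_distribution N \<and> M = conv_pow N n))"

definition infinitely_divisible_pos :: "real measure \<Rightarrow> bool" where
  "infinitely_divisible_pos M \<longleftrightarrow> infinitely_divisible M \<and> emeasure M {..<0} = 0"

definition dist_log :: "(real \<Rightarrow> complex) \<Rightarrow> real \<Rightarrow> complex" where
  "dist_log f = (THE \<psi>. continuous_on UNIV \<psi> \<and> \<psi> 0 = 0 \<and> (\<forall>t. exp (\<psi> t) = f t))"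

definition id_pow :: "real measure \<Rightarrow> real \<Rightarrow> real measure" where
  "id_pow M s = (THE N. real_distribution N \<and>
      (\<forall>t. char N t = exp (complex_of_real s * dist_log (char M) t)))"

text \<open>Lambda(mu_L, mu_T): the law of L_{T_1}, i.e. the mixture of mu_L^s over s ~ mu_T.\<close>
definition Lambda :: "real measure \<Rightarrow> real measure \<Rightarrow> real measure" where
  "Lambda ML MT = measure_of UNIV (sets borel)
      (\<lambda>A. \<integral>\<^sup>+ s. emeasure (id_pow ML s) A \<partial>MT)"

end

theory Submission
  imports Defs
begin

text \<open>
  The characteristic function \<phi> of an infinitely divisible law never vanishes: the doubling
  inequality 1 - |\<phi>(2t)|^2 \<le> 4 (1 - |\<phi>(t)|^2), applied to the k-th roots, spreads
  nonvanishing from a neighbourhood of 0 to the whole line. Hence \<phi> has a distinguished logarithm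
  \<psi>, and \<mu>_L^s is the law with characteristic function exp (s \<psi>): a convolution power of
  a root for rational s, and a weak limit of these for real s, which exists by Levy's continuity
  theorem. \<Lambda>(\<mu>_L, \<mu>_T) is the mixture of the kernel s \<mapsto> \<mu>_L^s
  under \<mu>_T, so its characteristic function is t \<mapsto> \<integral> exp (s \<psi>(t)) d\<mu>_T(s).
  By Levy's continuity theorem both claims reduce to pointwise convergence of these integrals: in
  \<mu>_T because the integrand is bounded and continuous in s, and in \<mu>_L by dominated
  convergence, because weak convergence makes characteristic functions converge locally uniformly
  and hence \<psi> converge pointwise.
\<close>

section \<open>Characteristic functions of convolutions\<close>

lemma real_distribution_convolution:
  assumes "real_distribution N" "real_distribution M"
  shows "real_distribution (convolution N M)"
proof -
  interpret N: real_distribution N by fact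
  interpret M: real_distribution M by fact
  interpret P: pair_prob_space N M ..
  show ?thesis unfolding convolution_def
    by (intro real_distribution.intro P.prob_space_distr real_distribution_axioms.intro) auto
qed

lemma char_convolution:
  assumes "real_distribution N" "real_distribution M"
  shows "char (convolution N M) t = char N t * char M t"
proof -
  interpret N: real_distribution N by fact
  interpret M: real_distribution M by fact
  interpret P: pair_prob_space N M ..
  have int: "integrable (N \<Otimes>\<^sub>M M) (\<lambda>z. iexp (t * fst z) * iexp (t * snd z))"
    by (rule P.integrable_const_bound[where B=1]) (auto simp: norm_mult)
  have "char (convolution N M) t = (\<integral>z. iexp (t * fst z) * iexp (t * snd z) \<partial>(N \<Otimes>\<^sub>M M))"
    unfolding convolution_def char_def
    by (subst integral_distr) (auto simp: split_beta' distrib_left exp_add mult.commute mult.left_commute)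
  also have "\<dots> = (\<integral>x. (\<integral>y. iexp (t * x) * iexp (t * y) \<partial>M) \<partial>N)"
    using P.integral_fst'[OF int] by simp
  also have "\<dots> = char N t * char M t"
    unfolding char_def by simp
  finally show ?thesis .
qed

lemma real_distribution_conv_pow:
  "real_distribution N \<Longrightarrow> real_distribution (conv_pow N n)"
proof (induction n)
  case 0
  then show ?case
    by (simp add: real_distribution_def real_distribution_axioms_def prob_space_return)
qed (simp add: real_distribution_convolution)

lemma char_conv_pow:
  "real_distribution N \<Longrightarrow> char (conv_pow N n) t = char N t ^ n"
  by (induction n) (simp_all add: char_def[of "return _ _"] integral_return char_convolution
      real_distribution_conv_pow)

lemma (in real_distribution) real_distribution_reflect:
  "real_distribution (distr M borel uminus)"
  by (rule real_distribution_distr) simp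

lemma (in real_distribution) char_reflect:
  "char (distr M borel uminus) t = cnj (char M t)"
proof -
  have "char (distr M borel uminus) t = (\<integral>x. cnj (iexp (t * x)) \<partial>M)"
    unfolding char_def by (subst integral_distr) (auto simp: exp_cnj)
  then show ?thesis
    unfolding char_def using Bochner_Integration.integral_cnj[of M "\<lambda>x. iexp (t * x)"] by argo
qed

lemma (in real_distribution) norm_char_squared:
  "complex_of_real ((cmod (char M t))\<^sup>2) = char (convolution M (distr M borel uminus)) t"
  by (simp add: complex_norm_square[symmetric] char_convolution char_reflect real_distribution_axioms
      real_distribution_reflect)

lemma (in real_distribution) Re_char: "Re (char M t) = (\<integral>x. cos (t * x) \<partial>M)"
proof -
  have "Re (char M t) = (\<integral>x. Re (iexp (t * x)) \<partial>M)"
    unfolding char_def by (rule integral_Re[symmetric]) (rule integrable_iexp, auto)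
  then show ?thesis by (simp add: cos_of_real Re_exp)
qed

lemma (in real_distribution) Im_char: "Im (char M t) = (\<integral>x. sin (t * x) \<partial>M)"
proof -
  have "Im (char M t) = (\<integral>x. Im (iexp (t * x)) \<partial>M)"
    unfolding char_def by (rule integral_Im[symmetric]) (rule integrable_iexp, auto)
  then show ?thesis by (simp add: Im_exp)
qed

lemma one_minus_cos_double_le: "1 - cos (2 * u) \<le> 4 * (1 - cos (u::real))"
proof -
  have "1 - cos (2 * u) = 2 * (1 - cos u) * (1 + cos u)"
    using cos_double_cos[of u] by (simp add: power2_eq_square algebra_simps)
  also have "\<dots> \<le> 2 * (1 - cos u) * 2"
    by (intro mult_left_mono) auto
  finally show ?thesis by simp
qed

lemma (in real_distribution) one_minus_Re_char_double_le:
  "1 - Re (char M (2 * t)) \<le> 4 * (1 - Re (char M t))"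
proof -
  have cos: "integrable M (\<lambda>x. cos (s * x))" for s
    by (rule integrable_const_bound[where B=1]) auto
  have int: "integrable M (\<lambda>x. c * (1 - cos (s * x)))" for c s
    using cos by (intro integrable_mult_right integrable_diff) auto
  have "1 - Re (char M (2 * t)) = (\<integral>x. 1 * (1 - cos (2 * t * x)) \<partial>M)"
    using cos by (simp add: Re_char prob_space flip: space_eq_univ)
  also have "\<dots> \<le> (\<integral>x. 4 * (1 - cos (t * x)) \<partial>M)"
    using one_minus_cos_double_le by (intro integral_mono int) (simp add: mult.assoc)
  also have "\<dots> = 4 * (1 - Re (char M t))"
    using cos by (simp add: Re_char prob_space flip: space_eq_univ)
  finally show ?thesis .
qed

lemma (in real_distribution) one_minus_norm_char_double_le:
  "1 - (cmod (char M (2 * t)))\<^sup>2 \<le> 4 * (1 - (cmod (char M t))\<^sup>2)"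
  using real_distribution.one_minus_Re_char_double_le[OF real_distribution_convolution
      [OF real_distribution_axioms real_distribution_reflect]]
  by (simp flip: norm_char_squared)

lemma norm_char_root_squared:
  assumes "real_distribution N" "k \<ge> 1"
  shows "(cmod (char N t))\<^sup>2 = cmod (char (conv_pow N k) t) powr (2 / k)"
proof (cases "char N t = 0")
  case False
  then have "cmod (char (conv_pow N k) t) powr (2 / k) = cmod (char N t) powr (k * (2 / k))"
    by (simp add: char_conv_pow assms norm_power powr_realpow[symmetric] powr_powr)
  also have "\<dots> = (cmod (char N t))\<^sup>2"
    using assms(2) False by (simp add: powr_realpow)
  finally show ?thesis ..
qed (use assms in \<open>simp add: char_conv_pow\<close>)

section \<open>Nonvanishing of infinitely divisible characteristic functions\<close>

lemma infinitely_divisible_real_distribution: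
  "infinitely_divisible M \<Longrightarrow> real_distribution M"
  by (simp add: infinitely_divisible_def)

lemma infinitely_divisible_pos_real_distribution:
  "infinitely_divisible_pos M \<Longrightarrow> real_distribution M"
  by (simp add: infinitely_divisible_pos_def infinitely_divisible_def)

lemma infinitely_divisible_char_double_nonzero:
  assumes M: "infinitely_divisible M" and nz: "char M t \<noteq> 0"
  shows "char M (2 * t) \<noteq> 0"
proof
  assume zero: "char M (2 * t) = 0"
  (* For a k-th root N of M, |char N|\<^sup>2 = |char M| powr (2 / k) is close to 1 at t for large k,
     and the doubling inequality for N then bounds it away from 0 at 2 t. *)
  have "(\<lambda>k. 2 / real k) \<longlonglongrightarrow> 0"
    by (intro tendsto_divide_0[OF tendsto_const] filterlim_real_sequentially
        filterlim_at_top_imp_at_infinity)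
  then have "(\<lambda>k. 4 * (1 - cmod (char M t) powr (2 / real k))) \<longlonglongrightarrow> 4 * (1 - cmod (char M t) powr 0)"
    using nz by (intro tendsto_intros) auto
  then have "eventually (\<lambda>k. 4 * (1 - cmod (char M t) powr (2 / real k)) < 1 \<and> k \<ge> 1) sequentially"
    using nz by (intro eventually_conj order_tendstoD eventually_ge_at_top) auto
  then obtain k where k: "k \<ge> 1" "4 * (1 - cmod (char M t) powr (2 / real k)) < 1"
    unfolding eventually_sequentially by blast
  then obtain N where N: "real_distribution N" "M = conv_pow N k"
    using M unfolding infinitely_divisible_def by blast
  have "1 - (cmod (char N (2 * t)))\<^sup>2 \<le> 4 * (1 - (cmod (char N t))\<^sup>2)"
    using N(1) by (rule real_distribution.one_minus_norm_char_double_le)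
  then show False
    using k zero by (simp add: norm_char_root_squared[OF N(1) k(1)] flip: N(2))
qed

lemma infinitely_divisible_char_nonzero:
  assumes M: "infinitely_divisible M"
  shows "char M t \<noteq> 0"
proof -
  interpret real_distribution M
    using M by (rule infinitely_divisible_real_distribution)
  obtain d where d: "d > 0" "\<And>s. \<bar>s\<bar> < d \<Longrightarrow> char M s \<noteq> 0"
  proof -
    obtain d where "d > 0" "\<And>s. dist s 0 < d \<Longrightarrow> dist (char M s) (char M 0) < 1"
      using isCont_char[of 0] unfolding continuous_at_eps_delta by (metis zero_less_one)
    then show ?thesis
      using that[of d] char_zero by (force simp: dist_norm)
  qed
  have "char M s \<noteq> 0" if "\<bar>s\<bar> < d * 2 ^ m" for s m
    using that
  proof (induction m arbitrary: s)
    case (Suc m)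
    then have "char M (2 * (s / 2)) \<noteq> 0"
      by (intro infinitely_divisible_char_double_nonzero[OF M] Suc.IH) auto
    then show ?case by simp
  qed (use d in simp)
  moreover obtain m :: nat where "\<bar>t\<bar> / d < 2 ^ m"
    using real_arch_pow[of 2 "\<bar>t\<bar> / d"] by auto
  ultimately show ?thesis
    using d by (simp add: field_simps)
qed

section \<open>The distinguished logarithm\<close>

lemma continuous_log_unique:
  fixes g h :: "'a::topological_space \<Rightarrow> complex"
  assumes S: "connected S" and cont: "continuous_on S g" "continuous_on S h"
    and same_exp: "\<And>x. x \<in> S \<Longrightarrow> exp (g x) = exp (h x)"
    and a: "a \<in> S" "g a = h a" and x: "x \<in> S"
  shows "g x = h x"
proof -
  have period: "\<exists>n::int. g x - h x = of_int (2 * n) * pi * \<i>" if "x \<in> S" for x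
    using same_exp[OF that] unfolding exp_eq by (metis add_diff_cancel_left')
  have norm_period: "norm (of_int (2 * j) * complex_of_real pi * \<i>) = 2 * pi * \<bar>real_of_int j\<bar>"
    for j :: int
    by (simp add: norm_mult)
  have "(\<lambda>x. g x - h x) constant_on S"
  proof (rule continuous_discrete_range_constant[OF S])
    show "continuous_on S (\<lambda>x. g x - h x)"
      by (intro continuous_intros cont)
    fix x assume "x \<in> S"
    then obtain n where n: "g x - h x = of_int (2 * n) * pi * \<i>"
      using period by blast
    show "\<exists>e>0. \<forall>y. y \<in> S \<and> g y - h y \<noteq> g x - h x \<longrightarrow> e \<le> norm (g y - h y - (g x - h x))"
    proof (intro exI[of _ "2 * pi"] conjI allI impI)
      fix y assume y: "y \<in> S \<and> g y - h y \<noteq> g x - h x"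
      then obtain m where m: "g y - h y = of_int (2 * m) * pi * \<i>"
        using period by blast
      with n y have "1 \<le> \<bar>real_of_int (m - n)\<bar>"
        by auto
      have "norm (g y - h y - (g x - h x)) = norm (of_int (2 * (m - n)) * complex_of_real pi * \<i>)"
        unfolding m n by (simp add: algebra_simps)
      also have "\<dots> = 2 * pi * \<bar>real_of_int (m - n)\<bar>"
        by (rule norm_period)
      finally show "2 * pi \<le> norm (g y - h y - (g x - h x))"
        using \<open>1 \<le> _\<close> by simp
    qed simp
  qed
  then show ?thesis
    using a x unfolding constant_on_def by (metis eq_iff_diff_eq_0)
qed

lemma dist_log:
  fixes f :: "real \<Rightarrow> complex"
  assumes cont: "continuous_on UNIV f" and nz: "\<And>t. f t \<noteq> 0" and f0: "f 0 = 1"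
  shows "continuous_on UNIV (dist_log f)" "dist_log f 0 = 0" "exp (dist_log f t) = f t"
proof -
  obtain g where g: "continuous_on UNIV g" "\<And>t. f t = exp (g t)"
    by (rule continuous_logarithm_on_contractible[OF cont contractible_UNIV]) (use nz in auto)
  have "\<exists>!\<psi>. continuous_on UNIV \<psi> \<and> \<psi> 0 = 0 \<and> (\<forall>t. exp (\<psi> t) = f t)"
  proof (rule ex_ex1I)
    have "exp (g t - g 0) = f t" for t
      by (simp add: exp_diff g(2)[symmetric] f0)
    then show "\<exists>\<psi>. continuous_on UNIV \<psi> \<and> \<psi> 0 = 0 \<and> (\<forall>t. exp (\<psi> t) = f t)"
      by (intro exI[of _ "\<lambda>t. g t - g 0"]) (simp add: continuous_on_diff g(1))
  next
    fix \<psi> \<phi> assume "continuous_on UNIV \<psi> \<and> \<psi> 0 = 0 \<and> (\<forall>t. exp (\<psi> t) = f t)"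
      "continuous_on UNIV \<phi> \<and> \<phi> 0 = 0 \<and> (\<forall>t. exp (\<phi> t) = f t)"
    then show "\<psi> = \<phi>"
      using continuous_log_unique[OF connected_UNIV, of \<psi> \<phi> 0] by auto
  qed
  from theI'[OF this] show "continuous_on UNIV (dist_log f)" "dist_log f 0 = 0" "exp (dist_log f t) = f t"
    unfolding dist_log_def by auto
qed

lemma (in real_distribution) dist_log_char:
  assumes "\<And>t. char M t \<noteq> 0"
  shows "continuous_on UNIV (dist_log (char M))" "dist_log (char M) 0 = 0"
    "exp (dist_log (char M) t) = char M t"
  using dist_log[of "char M"] assms
  by (auto simp: char_zero continuous_at_imp_continuous_on isCont_char)

lemma dist_log_char_conv_pow:
  assumes N: "real_distribution N" and nz: "\<And>t. char N t \<noteq> 0"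
  shows "dist_log (char (conv_pow N k)) t = of_nat k * dist_log (char N) t"
proof -
  interpret N: real_distribution N by fact
  interpret Nk: real_distribution "conv_pow N k"
    using N by (rule real_distribution_conv_pow)
  have nzk: "char (conv_pow N k) t \<noteq> 0" for t
    using nz by (simp add: char_conv_pow N)
  show ?thesis
  proof (rule continuous_log_unique[where S=UNIV and a=0 and h="\<lambda>t. of_nat k * dist_log (char N) t"])
    show "continuous_on UNIV (dist_log (char (conv_pow N k)))"
      using Nk.dist_log_char nzk by blast
    show "continuous_on UNIV (\<lambda>t. of_nat k * dist_log (char N) t)"
      by (intro continuous_intros N.dist_log_char nz)
    show "exp (dist_log (char (conv_pow N k)) t) = exp (of_nat k * dist_log (char N) t)" for t
      by (simp add: Nk.dist_log_char nzk N.dist_log_char nz exp_of_nat_mult char_conv_pow N)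
  qed (simp_all add: Nk.dist_log_char nzk N.dist_log_char nz)
qed

lemma infinitely_divisible_dist_log_char:
  assumes "infinitely_divisible M"
  shows "continuous_on UNIV (dist_log (char M))" "dist_log (char M) 0 = 0"
    "exp (dist_log (char M) t) = char M t"
  using real_distribution.dist_log_char[OF infinitely_divisible_real_distribution[OF assms]]
    infinitely_divisible_char_nonzero[OF assms] by auto

lemma infinitely_divisible_rational_power:
  assumes M: "infinitely_divisible M" and k: "k \<ge> 1"
  obtains N where "real_distribution N"
    "\<And>t. char N t = exp (complex_of_real (real p / real k) * dist_log (char M) t)"
proof -
  obtain R where R: "real_distribution R" "M = conv_pow R k"
    using M k unfolding infinitely_divisible_def by blast
  have nz: "char R t \<noteq> 0" for t
    using infinitely_divisible_char_nonzero[OF M, of t] k by (auto simp: R char_conv_pow)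
  interpret R: real_distribution R by fact
  show ?thesis
  proof (rule that[OF real_distribution_conv_pow[OF R(1), of p]])
    fix t
    have "char (conv_pow R p) t = exp (of_nat p * dist_log (char R) t)"
      by (simp add: char_conv_pow R(1) R.dist_log_char nz exp_of_nat_mult)
    also have "\<dots> = exp (complex_of_real (real p / real k) * dist_log (char M) t)"
      using k by (simp add: R(2) dist_log_char_conv_pow[OF R(1) nz] field_simps)
    finally show "char (conv_pow R p) t = exp (complex_of_real (real p / real k) * dist_log (char M) t)" .
  qed
qed

section \<open>Levy's continuity theorem for an unknown limit\<close>

lemma set_integral_one_minus_cos:
  fixes u x :: real
  assumes "u \<ge> 0" "x \<noteq> 0"
  shows "(LBINT t:{-u..u}. 1 - cos (t * x)) = 2 * u - 2 * sin (u * x) / x"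
proof -
  have "(LBINT t:{-u..u}. 1 - cos (t * x)) = (LBINT t=-u..u. 1 - cos (x * t))"
    using assms by (simp add: interval_integral_Icc mult.commute)
  also have "\<dots> = (LBINT t=-u..u. 1) - (LBINT t=-u..u. cos (x * t))"
    by (intro interval_lebesgue_integral_diff interval_integrable_isCont) auto
  also have "\<dots> = 2 * u - (sin (x * u) / x - sin (x * - u) / x)"
    using assms by (simp add: integral_cos)
  also have "\<dots> = 2 * u - 2 * sin (u * x) / x"
    by (simp add: mult.commute add_divide_distrib)
  finally show ?thesis .
qed

lemma indicator_tail_le_set_integral_one_minus_cos:
  fixes u x :: real
  assumes "u > 0"
  shows "u * indicator {x. 2 / u \<le> \<bar>x\<bar>} x \<le> (LBINT t:{-u..u}. 1 - cos (t * x))"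
proof (cases "2 / u \<le> \<bar>x\<bar>")
  case True
  have "0 < 2 / u"
    using assms by simp
  then have x: "x \<noteq> 0"
    using True by auto
  have "1 / \<bar>x\<bar> \<le> u / 2"
    using True assms by (simp add: divide_le_eq mult.commute)
  moreover have "sin (u * x) / x \<le> 1 / \<bar>x\<bar>"
    using abs_sin_le_one[of "u * x"] by (auto simp: divide_le_eq abs_if split: if_splits)
  ultimately show ?thesis
    using True assms x by (simp add: set_integral_one_minus_cos)
next
  case False
  have "0 \<le> (LBINT t:{-u..u}. 1 - cos (t * x))"
    unfolding set_lebesgue_integral_def by (intro Bochner_Integration.integral_nonneg) auto
  then show ?thesis
    using False by simp
qed

lemma (in real_distribution) tail_le_set_integral_char:
  assumes u: "u > 0"
  shows "u * measure M {x. 2 / u \<le> \<bar>x\<bar>} \<le> (LBINT t:{-u..u}. 1 - Re (char M t))"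
proof -
  interpret P: pair_sigma_finite M lborel ..
  let ?f = "\<lambda>x t. indicator {-u..u} t * (1 - cos (t * x))"
  have "emeasure (M \<Otimes>\<^sub>M lborel) (UNIV \<times> {-u..u}) = emeasure M UNIV * emeasure lborel {-u..u}"
    by (rule lborel.emeasure_pair_measure_Times) auto
  moreover have "emeasure M UNIV = 1"
    using emeasure_space_1 by simp
  ultimately have "integrable (M \<Otimes>\<^sub>M lborel) (\<lambda>z. indicator (UNIV \<times> {-u..u}) z *\<^sub>R (1 - cos (snd z * fst z)))"
    using u by (intro integrableI_bounded_set_indicator[where B=2])
      (auto simp: emeasure_space_1 ennreal_mult_less_top)
  then have int: "integrable (M \<Otimes>\<^sub>M lborel) (case_prod ?f)"
    by (simp add: indicator_times split_beta')
  have cos: "integrable M (\<lambda>x. cos (t * x))" for t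
    by (rule integrable_const_bound[where B=1]) auto
  have tail: "integrable M (indicator {x. 2 / u \<le> \<bar>x\<bar>} :: real \<Rightarrow> real)"
    by (rule integrable_const_bound[where B=1]) auto
  have "u * measure M {x. 2 / u \<le> \<bar>x\<bar>} = (\<integral>x. u * indicator {x. 2 / u \<le> \<bar>x\<bar>} x \<partial>M)"
    by simp
  also have "\<dots> \<le> (\<integral>x. (\<integral>t. ?f x t \<partial>lborel) \<partial>M)"
    using indicator_tail_le_set_integral_one_minus_cos[OF u] P.integrable_fst'[OF int] tail
    by (intro integral_mono) (auto simp: set_lebesgue_integral_def)
  also have "\<dots> = (\<integral>t. (\<integral>x. ?f x t \<partial>M) \<partial>lborel)"
    by (rule P.Fubini_integral[OF int, symmetric])
  also have "\<dots> = (LBINT t:{-u..u}. 1 - Re (char M t))"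
    unfolding set_lebesgue_integral_def
    by (intro Bochner_Integration.integral_cong) (simp_all add: Re_char cos prob_space flip: space_eq_univ)
  finally show ?thesis .
qed

lemma (in real_distribution) measure_symmetric_Ioc_tendsto_1:
  "((\<lambda>K. measure M {-K<..K}) \<longlongrightarrow> 1) at_top"
proof -
  have "((\<lambda>K. cdf M K - cdf M (-K)) \<longlongrightarrow> 1 - 0) at_top"
    by (intro tendsto_diff cdf_lim_at_top_prob filterlim_compose[OF cdf_lim_at_bot]
        filterlim_uminus_at_bot_at_top)
  moreover have "eventually (\<lambda>K. cdf M K - cdf M (-K) = measure M {-K<..K}) at_top"
    using eventually_gt_at_top[of 0] by eventually_elim (simp add: cdf_diff_eq)
  ultimately show ?thesis
    by (simp add: tendsto_cong)
qed

lemma tight_if_char_tendsto: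
  fixes M :: "nat \<Rightarrow> real measure" and g :: "real \<Rightarrow> complex"
  assumes M: "\<And>n. real_distribution (M n)"
    and lim: "\<And>t. (\<lambda>n. char (M n) t) \<longlonglongrightarrow> g t" and cont: "isCont g 0"
  shows "tight M"
  unfolding tight_def
proof (intro conjI allI impI M)
  fix \<epsilon> :: real assume \<epsilon>: "\<epsilon> > 0"
  interpret Mn: real_distribution "M n" for n by fact
  have g0: "g 0 = 1"
    using lim[of 0] by (simp add: Mn.char_zero LIMSEQ_const_iff)
  have Re_char_le: "\<bar>Re (char (M n) t)\<bar> \<le> 1" for n t
    using abs_Re_le_cmod Mn.cmod_char_le_1 by (rule order_trans)
  have Re_g_le: "\<bar>Re (g t)\<bar> \<le> 1" for t
    by (rule LIMSEQ_le_const2[OF tendsto_rabs[OF tendsto_Re[OF lim]]]) (simp add: Re_char_le)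
  have [measurable]: "g \<in> borel_measurable borel"
    by (rule borel_measurable_LIMSEQ_metric[OF _ lim]) simp
  obtain d where d: "d > 0" and g_near_1: "\<And>t. \<bar>t\<bar> \<le> d \<Longrightarrow> 1 - Re (g t) \<le> \<epsilon> / 4"
  proof -
    obtain e where e: "e > 0" "\<And>t. dist t 0 < e \<Longrightarrow> dist (g t) (g 0) < \<epsilon> / 4"
      using cont \<epsilon> unfolding continuous_at_eps_delta by (metis divide_pos_pos zero_less_numeral)
    show ?thesis
    proof (rule that[of "e / 2"])
      fix t assume "\<bar>t\<bar> \<le> e / 2"
      then have "dist (g t) (g 0) < \<epsilon> / 4"
        using e by (intro e(2)) simp
      moreover have "1 - Re (g t) \<le> dist (g t) (g 0)"
        using complex_Re_le_cmod[of "1 - g t"] by (simp add: g0 dist_norm norm_minus_commute)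
      ultimately show "1 - Re (g t) \<le> \<epsilon> / 4"
        by simp
    qed (use e in simp)
  qed
  let ?I = "\<lambda>f. LBINT t:{-d..d}. 1 - Re (f t)"
  have "(\<lambda>n. ?I (char (M n))) \<longlonglongrightarrow> ?I g"
    unfolding set_lebesgue_integral_def
  proof (rule integral_dominated_convergence[where w="\<lambda>t. indicator {-d..d} t * 2"])
    show "AE t in lborel. norm (indicator {-d..d} t *\<^sub>R (1 - Re (char (M n) t))) \<le> indicator {-d..d} t * 2" for n
      using Re_char_le[of n] by (intro AE_I2) (auto simp: indicator_def abs_le_iff)
  qed (auto intro!: tendsto_intros lim simp: emeasure_lborel_Icc_eq)
  moreover have "?I g \<le> (LBINT t:{-d..d}. \<epsilon> / 4)"
  proof (rule set_integral_mono)
    show "set_integrable lborel {-d..d} (\<lambda>t. 1 - Re (g t))"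
      unfolding set_integrable_def using Re_g_le
      by (intro integrableI_bounded_set_indicator[where B=2]) (auto simp: emeasure_lborel_Icc_eq abs_le_iff)
  qed (use g_near_1 in \<open>auto simp: set_integrable_def emeasure_lborel_Icc_eq\<close>)
  moreover have "(LBINT t:{-d..d}. \<epsilon> / 4) < d * \<epsilon>"
    using d \<epsilon> by (simp add: set_lebesgue_integral_def)
  ultimately have "eventually (\<lambda>n. ?I (char (M n)) < d * \<epsilon>) sequentially"
    by (intro order_tendstoD) auto
  then obtain N where N: "\<And>n. n \<ge> N \<Longrightarrow> ?I (char (M n)) < d * \<epsilon>"
    unfolding eventually_sequentially by blast
  have tail: "1 - \<epsilon> < measure (M n) {-K<..K}" if "n \<ge> N" "2 / d \<le> K" for n K
  proof -
    have "d * measure (M n) {x. 2 / d \<le> \<bar>x\<bar>} < d * \<epsilon>"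
      using Mn.tail_le_set_integral_char[OF d] N[OF \<open>n \<ge> N\<close>] by (rule le_less_trans)
    then have "1 - \<epsilon> < 1 - measure (M n) {x. 2 / d \<le> \<bar>x\<bar>}"
      using d by simp
    also have "\<dots> = measure (M n) (UNIV - {x. 2 / d \<le> \<bar>x\<bar>})"
      by (subst Mn.prob_compl[simplified]) auto
    also have "\<dots> \<le> measure (M n) {-K<..K}"
      using \<open>2 / d \<le> K\<close> by (intro Mn.finite_measure_mono) auto
    finally show ?thesis .
  qed
  have "eventually (\<lambda>K. \<forall>n\<in>{..<N}. 1 - \<epsilon> < measure (M n) {-K<..K}) at_top"
    using \<epsilon> by (intro eventually_ball_finite ballI order_tendstoD(1)[OF Mn.measure_symmetric_Ioc_tendsto_1]) auto
  moreover have "eventually (\<lambda>K. 2 / d \<le> K \<and> 0 < K) at_top"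
    by (intro eventually_conj eventually_ge_at_top eventually_gt_at_top)
  ultimately have "eventually (\<lambda>K. -K < K \<and> (\<forall>n. 1 - \<epsilon> < measure (M n) {-K<..K})) at_top"
  proof eventually_elim
    case (elim K)
    have "1 - \<epsilon> < measure (M n) {-K<..K}" for n
      by (cases "n < N") (use elim tail in auto)
    then show ?case
      using elim by simp
  qed
  then obtain K where "-K < K" "\<forall>n. 1 - \<epsilon> < measure (M n) {-K<..K}"
    by (auto simp: eventually_at_top_linorder)
  then show "\<exists>a b. a < b \<and> (\<forall>n. 1 - \<epsilon> < measure (M n) {a<..b})"
    by blast
qed

(* The library's levy_continuity presupposes that the limit is a characteristic function;
   here this is concluded from continuity of g at 0. *)
lemma levy_continuity_limit_char:
  fixes M :: "nat \<Rightarrow> real measure" and g :: "real \<Rightarrow> complex"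
  assumes M: "\<And>n. real_distribution (M n)"
    and lim: "\<And>t. (\<lambda>n. char (M n) t) \<longlonglongrightarrow> g t" and cont: "isCont g 0"
  obtains N where "real_distribution N" "char N = g"
proof -
  obtain r N where r: "strict_mono r" "real_distribution N" "weak_conv_m (M \<circ> id \<circ> r) N"
    using tight_imp_convergent_subsubsequence[OF tight_if_char_tendsto[OF assms] strict_mono_id]
    by blast
  have "char N t = g t" for t
  proof (rule LIMSEQ_unique)
    show "(\<lambda>n. char ((M \<circ> id \<circ> r) n) t) \<longlonglongrightarrow> char N t"
      using r M by (intro levy_continuity1) (auto simp: o_def)
    show "(\<lambda>n. char ((M \<circ> id \<circ> r) n) t) \<longlonglongrightarrow> g t"
      using LIMSEQ_subseq_LIMSEQ[OF lim r(1)] by (simp add: o_def)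
  qed
  then show ?thesis
    using that r(2) by blast
qed

section \<open>Real convolution powers\<close>

lemma floor_mult_divide_tendsto:
  "(\<lambda>j. of_int \<lfloor>s * real (Suc j)\<rfloor> / real (Suc j)) \<longlonglongrightarrow> s"
proof (rule tendsto_sandwich[of "\<lambda>j. s - 1 / real (Suc j)" _ _ "\<lambda>j. s"])
  have "s - 1 / real (Suc j) \<le> of_int \<lfloor>s * real (Suc j)\<rfloor> / real (Suc j)" for j
  proof -
    have "s - 1 / real (Suc j) = (s * real (Suc j) - 1) / real (Suc j)"
      by (simp add: field_simps)
    also have "\<dots> \<le> of_int \<lfloor>s * real (Suc j)\<rfloor> / real (Suc j)"
      by (intro divide_right_mono) linarith+
    finally show ?thesis .
  qed
  then show "\<forall>\<^sub>F j in sequentially. s - 1 / real (Suc j) \<le> of_int \<lfloor>s * real (Suc j)\<rfloor> / real (Suc j)"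
    by simp
  have "of_int \<lfloor>s * real (Suc j)\<rfloor> / real (Suc j) \<le> s * real (Suc j) / real (Suc j)" for j
    by (intro divide_right_mono) linarith+
  then show "\<forall>\<^sub>F j in sequentially. of_int \<lfloor>s * real (Suc j)\<rfloor> / real (Suc j) \<le> s"
    by simp
  show "(\<lambda>j. s - 1 / real (Suc j)) \<longlonglongrightarrow> s"
    using tendsto_diff[OF tendsto_const LIMSEQ_inverse_real_of_nat] by (simp add: divide_inverse)
qed simp

lemma infinitely_divisible_real_power:
  assumes M: "infinitely_divisible M" and s: "s \<ge> 0"
  obtains N where "real_distribution N" "char N = (\<lambda>t. exp (complex_of_real s * dist_log (char M) t))"
proof -
  define q where "q j = real (nat \<lfloor>s * real (Suc j)\<rfloor>) / real (Suc j)" for j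
  have "\<exists>N. real_distribution N \<and> (\<forall>t. char N t = exp (complex_of_real (q j) * dist_log (char M) t))" for j
  proof -
    obtain N where "real_distribution N"
      "\<And>t. char N t = exp (complex_of_real (q j) * dist_log (char M) t)"
      unfolding q_def by (rule infinitely_divisible_rational_power[OF M, of "Suc j" "nat \<lfloor>s * real (Suc j)\<rfloor>"]) simp_all
    then show ?thesis by blast
  qed
  then obtain N where N: "\<And>j. real_distribution (N j)"
    "\<And>j t. char (N j) t = exp (complex_of_real (q j) * dist_log (char M) t)"
    by metis
  have "q = (\<lambda>j. of_int \<lfloor>s * real (Suc j)\<rfloor> / real (Suc j))"
    using s by (simp add: q_def fun_eq_iff del: of_nat_Suc)
  then have "q \<longlonglongrightarrow> s"
    using floor_mult_divide_tendsto by simp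
  then have "(\<lambda>j. char (N j) t) \<longlonglongrightarrow> exp (complex_of_real s * dist_log (char M) t)" for t
    unfolding N(2) by (intro tendsto_intros)
  moreover have "isCont (\<lambda>t. exp (complex_of_real s * dist_log (char M) t)) 0"
    using infinitely_divisible_dist_log_char(1)[OF M]
    by (intro continuous_intros) (simp add: continuous_on_eq_continuous_at)
  ultimately show ?thesis
    by (rule levy_continuity_limit_char[OF N(1)]) (rule that)
qed

lemma id_pow:
  assumes M: "infinitely_divisible M" and s: "s \<ge> 0"
  shows "real_distribution (id_pow M s)"
    "char (id_pow M s) t = exp (complex_of_real s * dist_log (char M) t)"
proof -
  have "\<exists>!N. real_distribution N \<and> (\<forall>t. char N t = exp (complex_of_real s * dist_log (char M) t))"
  proof (rule ex_ex1I)
    obtain N where "real_distribution N" "char N = (\<lambda>t. exp (complex_of_real s * dist_log (char M) t))"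
      by (rule infinitely_divisible_real_power[OF M s])
    then show "\<exists>N. real_distribution N \<and> (\<forall>t. char N t = exp (complex_of_real s * dist_log (char M) t))"
      by auto
  qed (auto intro!: Levy_uniqueness simp: fun_eq_iff)
  from theI'[OF this] show "real_distribution (id_pow M s)"
    "char (id_pow M s) t = exp (complex_of_real s * dist_log (char M) t)"
    unfolding id_pow_def by auto
qed

section \<open>Subordination as a Markov kernel\<close>

lemma indicator_atMost_approx_tendsto:
  fixes x y :: real
  shows "(\<lambda>k. min 1 (max 0 (1 - real (Suc k) * (y - x)))) \<longlonglongrightarrow> indicator {..x} y"
proof (cases "y \<le> x")
  case True
  then have "min 1 (max 0 (1 - real (Suc k) * (y - x))) = 1" for k
    using mult_nonneg_nonpos[of "real (Suc k)" "y - x"] by auto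
  then show ?thesis
    using True by simp
next
  case False
  obtain N :: nat where N: "1 / (y - x) < real N"
    using reals_Archimedean2 by blast
  have "min 1 (max 0 (1 - real (Suc k) * (y - x))) = 0" if "k \<ge> N" for k
  proof -
    have "1 < real N * (y - x)"
      using N False by (simp add: field_simps)
    also have "\<dots> \<le> real (Suc k) * (y - x)"
      using that False by (intro mult_right_mono) auto
    finally show ?thesis by simp
  qed
  then have "eventually (\<lambda>k. min 1 (max 0 (1 - real (Suc k) * (y - x))) = 0) sequentially"
    unfolding eventually_sequentially by blast
  then show ?thesis
    using False by (simp add: tendsto_eventually)
qed

lemma measurable_prob_algebra_if_weak_conv:
  fixes K :: "'a::metric_space \<Rightarrow> real measure"
  assumes K: "\<And>s. real_distribution (K s)"
    and weak_conv: "\<And>u a. u \<longlonglongrightarrow> a \<Longrightarrow> weak_conv_m (\<lambda>n. K (u n)) (K a)"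
  shows "K \<in> borel \<rightarrow>\<^sub>M prob_algebra borel"
proof (rule measurable_prob_algebra_generated[where \<Omega>=UNIV and G="range atMost"])
  show "sets borel = sigma_sets UNIV (range (atMost :: real \<Rightarrow> real set))"
    by (subst borel_eq_atMost) simp
  show "Int_stable (range (atMost :: real \<Rightarrow> real set))"
    by (auto simp: Int_stable_def intro!: image_eqI[where x="min _ _"])
  have integral_cont: "continuous_on UNIV (\<lambda>s. \<integral>x. h x \<partial>K s)"
    if h: "\<And>x. isCont h x" "\<And>x. norm (h x) \<le> B" for h :: "real \<Rightarrow> real" and B
  proof (intro continuous_at_imp_continuous_on ballI continuous_at_sequentiallyI)
    fix a :: 'a and u :: "nat \<Rightarrow> 'a" assume "u \<longlonglongrightarrow> a"
    then show "(\<lambda>n. \<integral>x. h x \<partial>K (u n)) \<longlonglongrightarrow> (\<integral>x. h x \<partial>K a)"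
      using K h by (intro weak_conv_imp_integral_bdd_continuous_conv[OF _ _ weak_conv]) auto
  qed
  fix A :: "real set" assume "A \<in> range atMost"
  then obtain x where A: "A = {..x}" by auto
  define h where "h k y = min 1 (max 0 (1 - real (Suc k) * (y - x)))" for k y
  have "(\<lambda>s. measure (K s) {..x}) \<in> borel_measurable borel"
  proof (rule borel_measurable_LIMSEQ_real)
    show "(\<lambda>s. \<integral>y. h k y \<partial>K s) \<in> borel_measurable borel" for k
      by (intro borel_measurable_continuous_onI integral_cont[where B=1]) (auto simp: h_def intro!: continuous_intros)
    fix s
    interpret real_distribution "K s" by (rule K)
    have "(\<lambda>k. \<integral>y. h k y \<partial>K s) \<longlonglongrightarrow> (\<integral>y. indicator {..x} y \<partial>K s)"
    proof (rule integral_dominated_convergence[where w="\<lambda>_. 1"])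
      show "AE y in K s. (\<lambda>k. h k y) \<longlonglongrightarrow> indicator {..x} y"
        unfolding h_def by (intro AE_I2 indicator_atMost_approx_tendsto)
    qed (auto simp: h_def)
    then show "(\<lambda>k. \<integral>y. h k y \<partial>K s) \<longlonglongrightarrow> measure (K s) {..x}"
      by simp
  qed
  then show "(\<lambda>s. emeasure (K s) A) \<in> borel_measurable borel"
    using K by (simp add: A real_distribution_def prob_space_def finite_measure.emeasure_eq_measure)
qed (use K in \<open>auto simp: real_distribution_def real_distribution.events_eq_borel\<close>)

lemma real_distribution_in_prob_algebra:
  "real_distribution M \<Longrightarrow> M \<in> space (prob_algebra borel)"
  by (simp add: space_prob_algebra real_distribution_def real_distribution.events_eq_borel)

lemma real_distribution_bind:
  assumes A: "A \<in> space (prob_algebra L)" and K: "K \<in> L \<rightarrow>\<^sub>M prob_algebra borel"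
  shows "real_distribution (A \<bind> K)"
  using prob_space_bind'[OF A K] sets_bind'[OF A K]
  by (simp add: real_distribution_def real_distribution_axioms_def)

lemma char_bind:
  assumes A: "A \<in> space (prob_algebra L)" and K: "K \<in> L \<rightarrow>\<^sub>M prob_algebra borel"
  shows "char (A \<bind> K) t = (\<integral>x. char (K x) t \<partial>A)"
proof -
  have sets_A: "sets A = sets L" and "prob_space A"
    using A by (simp_all add: space_prob_algebra)
  interpret A: prob_space A by fact
  interpret B: real_distribution "A \<bind> K"
    using A K by (rule real_distribution_bind)
  have K_sub: "K \<in> A \<rightarrow>\<^sub>M subprob_algebra borel"
    using measurable_prob_algebraD[OF K] measurable_cong_sets[OF sets_A refl] by metis
  have K_real: "real_distribution (K x)" if "x \<in> space A" for x
  proof -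
    have "K x \<in> space (prob_algebra borel)"
      using measurable_space[OF K] that sets_eq_imp_space_eq[OF sets_A] by simp
    then show ?thesis
      unfolding space_prob_algebra real_distribution_def real_distribution_axioms_def by simp
  qed
  have K_bounded: "AE x in A. emeasure (K x) (space (K x)) \<le> ennreal 1"
    using K_real by (intro AE_I2) (simp add: real_distribution_def prob_space.emeasure_space_1)
  have char_int: "integrable A (\<lambda>x. char (K x) t)"
  proof (rule A.integrable_const_bound[where B=1])
    show "AE x in A. norm (char (K x) t) \<le> 1"
      using K_real by (intro AE_I2) (simp add: real_distribution.cmod_char_le_1)
    show "(\<lambda>x. char (K x) t) \<in> borel_measurable A"
      unfolding char_def by (rule measurable_compose[OF K_sub integral_measurable_subprob_algebra]) simp
  qed
  have "Re (char (A \<bind> K) t) = (\<integral>y. cos (t * y) \<partial>(A \<bind> K))"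
    by (rule B.Re_char)
  also have "\<dots> = (\<integral>x. (\<integral>y. cos (t * y) \<partial>K x) \<partial>A)"
    by (rule integral_bind[OF _ _ K_sub _ K_bounded, where B=1]) (auto simp: A.finite_measure_axioms)
  also have "\<dots> = (\<integral>x. Re (char (K x) t) \<partial>A)"
    by (rule Bochner_Integration.integral_cong[OF refl]) (simp add: K_real real_distribution.Re_char)
  also have "\<dots> = Re (\<integral>x. char (K x) t \<partial>A)"
    by (rule integral_Re[OF char_int])
  finally have Re: "Re (char (A \<bind> K) t) = Re (\<integral>x. char (K x) t \<partial>A)" .
  have "Im (char (A \<bind> K) t) = (\<integral>y. sin (t * y) \<partial>(A \<bind> K))"
    by (rule B.Im_char)
  also have "\<dots> = (\<integral>x. (\<integral>y. sin (t * y) \<partial>K x) \<partial>A)"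
    by (rule integral_bind[OF _ _ K_sub _ K_bounded, where B=1]) (auto simp: A.finite_measure_axioms)
  also have "\<dots> = (\<integral>x. Im (char (K x) t) \<partial>A)"
    by (rule Bochner_Integration.integral_cong[OF refl]) (simp add: K_real real_distribution.Im_char)
  also have "\<dots> = Im (\<integral>x. char (K x) t \<partial>A)"
    by (rule integral_Im[OF char_int])
  finally have Im: "Im (char (A \<bind> K) t) = Im (\<integral>x. char (K x) t \<partial>A)" .
  from Re Im show ?thesis
    by (simp add: complex_eq_iff)
qed

(* Truncation at 0 makes the kernel total; as \<mu>\<^sub>T is concentrated on [0, \<infinity>),
   it does not change Lambda (Lambda_eq_bind). *)
definition pow_kernel :: "real measure \<Rightarrow> real \<Rightarrow> real measure" where
  "pow_kernel M s = id_pow M (max s 0)"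

lemma
  assumes "infinitely_divisible M"
  shows real_distribution_pow_kernel: "real_distribution (pow_kernel M s)"
    and char_pow_kernel: "char (pow_kernel M s) t = exp (complex_of_real (max s 0) * dist_log (char M) t)"
  using id_pow[OF assms, of "max s 0"] by (simp_all add: pow_kernel_def)

lemma pow_kernel_measurable:
  assumes M: "infinitely_divisible M"
  shows "pow_kernel M \<in> borel \<rightarrow>\<^sub>M prob_algebra borel"
proof (rule measurable_prob_algebra_if_weak_conv)
  show "real_distribution (pow_kernel M s)" for s
    using M by (rule real_distribution_pow_kernel)
  fix u :: "nat \<Rightarrow> real" and a :: real assume "u \<longlonglongrightarrow> a"
  then show "weak_conv_m (\<lambda>n. pow_kernel M (u n)) (pow_kernel M a)"
    using M by (intro levy_continuity real_distribution_pow_kernel)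
      (auto simp: char_pow_kernel intro!: tendsto_intros)
qed

lemma infinitely_divisible_pos_AE_nonneg:
  assumes "infinitely_divisible_pos M"
  shows "AE s in M. s \<ge> 0"
proof (rule AE_I')
  show "{..<0} \<in> null_sets M"
    using assms infinitely_divisible_pos_real_distribution[OF assms]
    by (auto simp: null_sets_def infinitely_divisible_pos_def real_distribution.events_eq_borel)
qed auto

lemma Lambda_eq_bind:
  assumes L: "infinitely_divisible ML" and T: "infinitely_divisible_pos MT"
  shows "Lambda ML MT = MT \<bind> pow_kernel ML"
proof -
  have MT_space: "MT \<in> space (prob_algebra borel)"
    using infinitely_divisible_pos_real_distribution[OF T] by (rule real_distribution_in_prob_algebra)
  note K = pow_kernel_measurable[OF L]
  have sets_bind: "sets (MT \<bind> pow_kernel ML) = sets borel"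
    by (rule sets_bind'[OF MT_space K])
  have "Lambda ML MT = measure_of UNIV (sets borel) (emeasure (MT \<bind> pow_kernel ML))"
    unfolding Lambda_def
  proof (rule measure_of_eq)
    fix A :: "real set" assume "A \<in> sigma_sets UNIV (sets borel)"
    then have A: "A \<in> sets borel"
      by (metis sets.sigma_sets_eq space_borel)
    have "(\<integral>\<^sup>+ s. emeasure (id_pow ML s) A \<partial>MT) = (\<integral>\<^sup>+ s. emeasure (pow_kernel ML s) A \<partial>MT)"
      using infinitely_divisible_pos_AE_nonneg[OF T]
      by (intro nn_integral_cong_AE) (auto simp: pow_kernel_def max_def)
    also have "\<dots> = emeasure (MT \<bind> pow_kernel ML) A"
      by (rule emeasure_bind_prob_algebra[OF MT_space K A, symmetric])
    finally show "(\<integral>\<^sup>+ s. emeasure (id_pow ML s) A \<partial>MT) = emeasure (MT \<bind> pow_kernel ML) A" .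
  qed simp
  also have "\<dots> = MT \<bind> pow_kernel ML"
    using measure_of_of_measure[of "MT \<bind> pow_kernel ML"] sets_bind
    by (simp add: sets_eq_imp_space_eq[OF sets_bind])
  finally show ?thesis .
qed

lemma
  assumes L: "infinitely_divisible ML" and T: "infinitely_divisible_pos MT"
  shows real_distribution_Lambda: "real_distribution (Lambda ML MT)"
    and char_Lambda: "char (Lambda ML MT) t = (\<integral>s. exp (complex_of_real (max s 0) * dist_log (char ML) t) \<partial>MT)"
proof -
  have MT_space: "MT \<in> space (prob_algebra borel)"
    using infinitely_divisible_pos_real_distribution[OF T] by (rule real_distribution_in_prob_algebra)
  show "real_distribution (Lambda ML MT)"
    unfolding Lambda_eq_bind[OF L T] by (rule real_distribution_bind[OF MT_space pow_kernel_measurable[OF L]])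
  show "char (Lambda ML MT) t = (\<integral>s. exp (complex_of_real (max s 0) * dist_log (char ML) t) \<partial>MT)"
    unfolding Lambda_eq_bind[OF L T] char_bind[OF MT_space pow_kernel_measurable[OF L]]
    by (simp add: char_pow_kernel L)
qed

section \<open>Continuity of subordination\<close>

lemma norm_iexp_diff_le: "cmod (iexp a - iexp b) \<le> \<bar>a - b\<bar>"
proof -
  have "iexp a - iexp b = iexp b * (iexp (a - b) - 1)"
    by (simp add: right_diff_distrib flip: exp_add)
  moreover have "cmod (iexp (a - b) - 1) \<le> \<bar>a - b\<bar>"
    using iexp_approx1[of "a - b" 0] by simp
  ultimately show ?thesis
    by (simp add: norm_mult norm_exp_eq_Re)
qed

lemma weak_conv_imp_char_uniform_limit:
  assumes \<mu>: "\<And>n. real_distribution (\<mu> n)" and M: "real_distribution M"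
    and conv: "weak_conv_m \<mu> M"
  shows "uniform_limit {-T..T} (\<lambda>n. char (\<mu> n)) (char M) sequentially"
  unfolding uniform_limit_iff
proof (intro allI impI)
  fix e :: real assume e: "e > 0"
  (* Skorohod coupling: |char (\<mu> n) u - char M u| \<le> E (min 2 (\<bar>T\<bar> |Y n - Y_lim|)) for |u| \<le> T. *)
  obtain \<Omega> :: "real measure" and Y :: "nat \<Rightarrow> real \<Rightarrow> real" and Y_lim :: "real \<Rightarrow> real"
    where \<Omega>: "prob_space \<Omega>" and [measurable]: "\<And>n. Y n \<in> borel_measurable \<Omega>"
      and distr_Y: "\<And>n. distr \<Omega> borel (Y n) = \<mu> n" and Y_lim: "Y_lim \<in> \<Omega> \<rightarrow>\<^sub>M lborel"
      and distr_Y_lim: "distr \<Omega> borel Y_lim = M"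
      and Y_tendsto: "\<And>x. x \<in> space \<Omega> \<Longrightarrow> (\<lambda>n. Y n x) \<longlonglongrightarrow> Y_lim x"
    using Skorohod[OF \<mu> M conv] by blast
  interpret \<Omega>: prob_space \<Omega> by fact
  have [measurable]: "Y_lim \<in> borel_measurable \<Omega>"
    using Y_lim by (simp cong: measurable_cong_sets)
  define D where "D n = (\<integral>x. min 2 (\<bar>T\<bar> * \<bar>Y n x - Y_lim x\<bar>) \<partial>\<Omega>)" for n
  have "D \<longlonglongrightarrow> (\<integral>x. 0 \<partial>\<Omega>)"
    unfolding D_def
  proof (rule integral_dominated_convergence[where w="\<lambda>_. 2"])
    show "AE x in \<Omega>. (\<lambda>n. min 2 (\<bar>T\<bar> * \<bar>Y n x - Y_lim x\<bar>)) \<longlonglongrightarrow> 0"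
    proof (rule AE_I2)
      fix x assume "x \<in> space \<Omega>"
      then have "(\<lambda>n. min 2 (\<bar>T\<bar> * \<bar>Y n x - Y_lim x\<bar>)) \<longlonglongrightarrow> min 2 (\<bar>T\<bar> * \<bar>Y_lim x - Y_lim x\<bar>)"
        by (intro tendsto_intros Y_tendsto)
      then show "(\<lambda>n. min 2 (\<bar>T\<bar> * \<bar>Y n x - Y_lim x\<bar>)) \<longlonglongrightarrow> 0"
        by simp
    qed
  qed auto
  then have "eventually (\<lambda>n. D n < e) sequentially"
    using e by (intro order_tendstoD) auto
  then show "eventually (\<lambda>n. \<forall>u\<in>{-T..T}. dist (char (\<mu> n) u) (char M u) < e) sequentially"
  proof eventually_elim
    case (elim n)
    have "cmod (char (\<mu> n) u - char M u) < e" if u: "u \<in> {-T..T}" for u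
    proof -
      have "char (\<mu> n) u - char M u = (\<integral>x. iexp (u * Y n x) - iexp (u * Y_lim x) \<partial>\<Omega>)"
        unfolding char_def distr_Y[symmetric] distr_Y_lim[symmetric]
        by (simp add: integral_distr \<Omega>.integrable_iexp)
      also have "cmod \<dots> \<le> (\<integral>x. cmod (iexp (u * Y n x) - iexp (u * Y_lim x)) \<partial>\<Omega>)"
        by (rule integral_norm_bound)
      also have "\<dots> \<le> D n"
        unfolding D_def
      proof (rule integral_mono)
        show "integrable \<Omega> (\<lambda>x. cmod (iexp (u * Y n x) - iexp (u * Y_lim x)))"
          by (rule \<Omega>.integrable_const_bound[where B=2])
            (auto intro!: order_trans[OF norm_triangle_ineq4] simp: norm_exp_eq_Re)
        show "integrable \<Omega> (\<lambda>x. min 2 (\<bar>T\<bar> * \<bar>Y n x - Y_lim x\<bar>))"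
          by (rule \<Omega>.integrable_const_bound[where B=2]) auto
        fix x
        have "cmod (iexp (u * Y n x) - iexp (u * Y_lim x)) \<le> \<bar>u\<bar> * \<bar>Y n x - Y_lim x\<bar>"
          using norm_iexp_diff_le[of "u * Y n x" "u * Y_lim x"]
          by (simp add: abs_mult flip: right_diff_distrib)
        also have "\<dots> \<le> \<bar>T\<bar> * \<bar>Y n x - Y_lim x\<bar>"
          using u by (intro mult_right_mono) auto
        moreover have "cmod (iexp (u * Y n x) - iexp (u * Y_lim x)) \<le> 2"
          by (rule order_trans[OF norm_triangle_ineq4]) (simp add: norm_exp_eq_Re)
        ultimately show "cmod (iexp (u * Y n x) - iexp (u * Y_lim x)) \<le> min 2 (\<bar>T\<bar> * \<bar>Y n x - Y_lim x\<bar>)"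
          by simp
      qed
      finally show ?thesis
        using elim by simp
    qed
    then show ?case
      by (simp add: dist_norm)
  qed
qed

lemma Re_pos_if_norm_diff_less:
  fixes w z :: complex
  assumes "cmod (w - z) < cmod z"
  shows "Re (w / z) > 0"
proof -
  have "z \<noteq> 0"
    using assms by auto
  then have "w / z - 1 = (w - z) / z"
    by (simp add: field_simps)
  then have "cmod (w / z - 1) < 1"
    using assms \<open>z \<noteq> 0\<close> by (simp add: norm_divide divide_less_eq)
  then show ?thesis
    using abs_Re_le_cmod[of "w / z - 1"] by simp
qed

lemma dist_log_char_eq_add_Ln:
  assumes N: "real_distribution N" "\<And>u. char N u \<noteq> 0"
    and M: "real_distribution M" "\<And>u. char M u \<noteq> 0"
    and close: "\<And>u. u \<in> {-\<bar>t\<bar>..\<bar>t\<bar>} \<Longrightarrow> cmod (char N u - char M u) < cmod (char M u)"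
  shows "dist_log (char N) t = dist_log (char M) t + Ln (char N t / char M t)"
proof -
  interpret N: real_distribution N by fact
  interpret M: real_distribution M by fact
  let ?I = "{-\<bar>t\<bar>..\<bar>t\<bar>}"
  have not_nonpos: "char N u / char M u \<notin> \<real>\<^sub>\<le>\<^sub>0" if "u \<in> ?I" for u
    using Re_pos_if_norm_diff_less[OF close[OF that]] by (auto simp: complex_nonpos_Reals_iff)
  have "dist_log (char N) t - dist_log (char M) t = Ln (char N t / char M t)"
  proof (rule continuous_log_unique[where S="?I" and a=0])
    show "continuous_on ?I (\<lambda>u. dist_log (char N) u - dist_log (char M) u)"
      using N.dist_log_char(1)[OF N(2)] M.dist_log_char(1)[OF M(2)]
      by (intro continuous_intros) (auto intro: continuous_on_subset)
    show "continuous_on ?I (\<lambda>u. Ln (char N u / char M u))"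
      using not_nonpos M(2)
      by (intro continuous_intros continuous_at_imp_continuous_on ballI N.isCont_char M.isCont_char) auto
    show "exp (dist_log (char N) u - dist_log (char M) u) = exp (Ln (char N u / char M u))" for u
      using N(2) M(2) by (simp add: exp_diff N.dist_log_char M.dist_log_char)
  qed (auto simp: N.dist_log_char M.dist_log_char N(2) M(2) N.char_zero M.char_zero)
  then show ?thesis
    by (simp add: algebra_simps)
qed

lemma dist_log_char_tendsto:
  assumes \<mu>: "\<And>n. infinitely_divisible (\<mu> n)" and M: "infinitely_divisible M"
    and conv: "weak_conv_m \<mu> M"
  shows "(\<lambda>n. dist_log (char (\<mu> n)) t) \<longlonglongrightarrow> dist_log (char M) t"
proof -
  have \<mu>_real: "real_distribution (\<mu> n)" for n
    using \<mu> by (rule infinitely_divisible_real_distribution)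
  interpret M: real_distribution M
    using M by (rule infinitely_divisible_real_distribution)
  let ?I = "{-\<bar>t\<bar>..\<bar>t\<bar>}"
  have "continuous_on ?I (\<lambda>u. cmod (char M u))"
    by (intro continuous_at_imp_continuous_on ballI continuous_intros M.isCont_char)
  moreover have "?I \<noteq> {}"
    by simp
  ultimately obtain u0 where min: "\<forall>u\<in>?I. cmod (char M u0) \<le> cmod (char M u)"
    using continuous_attains_inf[OF compact_Icc] by blast
  have "cmod (char M u0) > 0"
    using infinitely_divisible_char_nonzero[OF M] by simp
  with weak_conv_imp_char_uniform_limit[OF \<mu>_real M.real_distribution_axioms conv, of "\<bar>t\<bar>"]
  have "eventually (\<lambda>n. \<forall>u\<in>?I. dist (char (\<mu> n) u) (char M u) < cmod (char M u0)) sequentially"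
    unfolding uniform_limit_iff by simp
  then have "eventually (\<lambda>n. dist_log (char (\<mu> n)) t = dist_log (char M) t + Ln (char (\<mu> n) t / char M t)) sequentially"
  proof eventually_elim
    case (elim n)
    have "cmod (char (\<mu> n) u - char M u) < cmod (char M u)" if "u \<in> ?I" for u
      using elim min that by (force simp: dist_norm intro: less_le_trans)
    then show ?case
      using infinitely_divisible_char_nonzero[OF \<mu>] infinitely_divisible_char_nonzero[OF M]
      by (intro dist_log_char_eq_add_Ln \<mu>_real M.real_distribution_axioms)
  qed
  moreover have "(\<lambda>n. dist_log (char M) t + Ln (char (\<mu> n) t / char M t))
      \<longlonglongrightarrow> dist_log (char M) t + Ln (char M t / char M t)"
    using infinitely_divisible_char_nonzero[OF M, of t]
    by (intro tendsto_intros levy_continuity1[OF \<mu>_real M.real_distribution_axioms conv])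
      (auto simp: complex_nonpos_Reals_iff)
  ultimately show ?thesis
    using infinitely_divisible_char_nonzero[OF M, of t] by (simp add: tendsto_cong)
qed

lemma Lambda_continuous_in_subordinator:
  assumes L: "infinitely_divisible ML" and Ts: "\<And>n. infinitely_divisible_pos (MTs n)"
    and T: "infinitely_divisible_pos MT" and conv: "weak_conv_m MTs MT"
  shows "weak_conv_m (\<lambda>n. Lambda ML (MTs n)) (Lambda ML MT)"
proof (rule levy_continuity)
  show "real_distribution (Lambda ML (MTs n))" for n
    using L Ts by (rule real_distribution_Lambda)
  show "real_distribution (Lambda ML MT)"
    using L T by (rule real_distribution_Lambda)
  fix t
  have "(\<lambda>n. \<integral>s. char (pow_kernel ML s) t \<partial>MTs n) \<longlonglongrightarrow> (\<integral>s. char (pow_kernel ML s) t \<partial>MT)"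
  proof (rule weak_conv_imp_integral_bdd_continuous_conv[OF _ _ conv])
    show "real_distribution (MTs n)" "real_distribution MT" for n
      using Ts T by (simp_all add: infinitely_divisible_pos_real_distribution)
    show "isCont (\<lambda>s. char (pow_kernel ML s) t) s" for s
      by (simp add: char_pow_kernel L continuous_intros)
    show "norm (char (pow_kernel ML s) t) \<le> 1" for s
      using L by (intro real_distribution.cmod_char_le_1 real_distribution_pow_kernel)
  qed
  then show "(\<lambda>n. char (Lambda ML (MTs n)) t) \<longlonglongrightarrow> char (Lambda ML MT) t"
    using L Ts T by (simp add: char_Lambda char_pow_kernel)
qed

lemma Lambda_continuous_in_Levy_process:
  assumes T: "infinitely_divisible_pos MT" and Ls: "\<And>n. infinitely_divisible (MLs n)"
    and L: "infinitely_divisible ML" and conv: "weak_conv_m MLs ML"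
  shows "weak_conv_m (\<lambda>n. Lambda (MLs n) MT) (Lambda ML MT)"
proof (rule levy_continuity)
  show "real_distribution (Lambda (MLs n) MT)" for n
    using Ls T by (rule real_distribution_Lambda)
  show "real_distribution (Lambda ML MT)"
    using L T by (rule real_distribution_Lambda)
  interpret T: real_distribution MT
    using T by (rule infinitely_divisible_pos_real_distribution)
  fix t
  have "(\<lambda>n. \<integral>s. char (pow_kernel (MLs n) s) t \<partial>MT) \<longlonglongrightarrow> (\<integral>s. char (pow_kernel ML s) t \<partial>MT)"
  proof (rule integral_dominated_convergence[where w="\<lambda>_. 1"])
    show "AE s in MT. (\<lambda>n. char (pow_kernel (MLs n) s) t) \<longlonglongrightarrow> char (pow_kernel ML s) t"
      using Ls L by (intro AE_I2) (simp add: char_pow_kernel tendsto_intros dist_log_char_tendsto[OF Ls L conv])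
    show "AE s in MT. norm (char (pow_kernel (MLs n) s) t) \<le> 1" for n
      using Ls by (intro AE_I2 real_distribution.cmod_char_le_1 real_distribution_pow_kernel)
  qed (simp_all add: char_pow_kernel Ls L)
  then show "(\<lambda>n. char (Lambda (MLs n) MT) t) \<longlonglongrightarrow> char (Lambda ML MT) t"
    using L Ls T by (simp add: char_Lambda char_pow_kernel)
qed

theorem proposition4p2:
  shows "(\<forall>ML MTs MT. infinitely_divisible ML \<and> (\<forall>n. infinitely_divisible_pos (MTs n)) \<and>
            infinitely_divisible_pos MT \<and> weak_conv_m MTs MT \<longrightarrow>
            weak_conv_m (\<lambda>n. Lambda ML (MTs n)) (Lambda ML MT))
       \<and> (\<forall>MT MLs ML. infinitely_divisible_pos MT \<and> (\<forall>n. infinitely_divisible (MLs n)) \<and>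
            infinitely_divisible ML \<and> weak_conv_m MLs ML \<longrightarrow>
            weak_conv_m (\<lambda>n. Lambda (MLs n) MT) (Lambda ML MT))"
  using Lambda_continuous_in_subordinator Lambda_continuous_in_Levy_process by blast

end
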